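(* Let $n \ge 3$ and let $x_1 < x_2 < \dots < x_n$ be real numbers. Then the maximum likelihood estimate $\hat\theta$ of the sample from the Cauchy distribution satisfies $$\left|\hat\theta - \frac{x_1+x_n}{2}\right| \le \frac{x_n - x_1}{2}.$$
   Context: $\mathbb{H} = \{\theta\in\mathbb{C}:\Im\theta>0\}$. The Cauchy distribution with parameter $\theta = \mu + i\sigma\in\mathbb{H}$ has density $f(x;\theta) = \frac{\sigma}{\pi}\frac{1}{(x-\mu)^2+\sigma^2}$; the maximum likelihood estimate is the (unique) maximizer over $\mathbb{H}$ of $\prod_{j=1}^n f(x_j;\theta)$. *)

theory Defs
  imports Complex_Main
begin

text \<open>Cauchy density with parameter theta = mu + i sigma in the upper half plane.\<close>
definition cauchy_density :: "real \<Rightarrow> complex \<Rightarrow> real" where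
  "cauchy_density x \<theta> = (Im \<theta> / pi) * (1 / ((x - Re \<theta>)^2 + (Im \<theta>)^2))"

definition cauchy_likelihood :: "nat \<Rightarrow> (nat \<Rightarrow> real) \<Rightarrow> complex \<Rightarrow> real" where
  "cauchy_likelihood n x \<theta> = (\<Prod>j=1..n. cauchy_density (x j) \<theta>)"

definition is_cauchy_mle :: "nat \<Rightarrow> (nat \<Rightarrow> real) \<Rightarrow> complex \<Rightarrow> bool" where
  "is_cauchy_mle n x \<theta> \<longleftrightarrow> Im \<theta> > 0 \<and>
     (\<forall>\<eta>. Im \<eta> > 0 \<longrightarrow> cauchy_likelihood n x \<eta> \<le> cauchy_likelihood n x \<theta>)"

end

theory Submission
  imports Defs
begin

text \<open>
  Let \<open>c\<close> and \<open>r\<close> be the midpoint and half-length of \<open>[x\<^sub>1, x\<^sub>n]\<close>. If \<open>\<theta>\<close> lies outside the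
  closed disc of radius \<open>r\<close> around \<open>c\<close>, reflect it in the boundary circle to \<open>\<eta>\<close>, which is
  again in the upper half plane. For real \<open>t\<close> and \<open>w = \<theta> - c\<close> one has the identity
  \<open>r\<^sup>2 |t - w|\<^sup>2 - |w|\<^sup>2 |t - w'|\<^sup>2 = (r\<^sup>2 - t\<^sup>2)(|w|\<^sup>2 - r\<^sup>2)\<close>, where \<open>w' = \<eta> - c\<close>; it shows that
  \<open>\<eta>\<close> gives every sample point in \<open>[x\<^sub>1, x\<^sub>n]\<close> at least the density that \<open>\<theta>\<close> gives it, and
  strictly more to the interior point \<open>x\<^sub>2\<close>. So \<open>\<eta>\<close> has a larger likelihood than \<open>\<theta>\<close>.
\<close>

definition circle_inversion :: "real \<Rightarrow> complex \<Rightarrow> complex" where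
  "circle_inversion r w = of_real (r\<^sup>2 / (cmod w)\<^sup>2) * w"

lemma Im_circle_inversion: "Im (circle_inversion r w) = r\<^sup>2 / (cmod w)\<^sup>2 * Im w"
  by (simp add: circle_inversion_def)

lemma Im_circle_inversion_pos:
  assumes "Im w > 0" and "r \<noteq> 0"
  shows "Im (circle_inversion r w) > 0"
proof -
  have "w \<noteq> 0"
    using assms(1) by auto
  then show ?thesis
    using assms by (simp add: Im_circle_inversion)
qed

lemma norm_diff_circle_inversion:
  assumes "w \<noteq> 0"
  shows "(cmod w)\<^sup>2 * (cmod (of_real t - circle_inversion r w))\<^sup>2
           = r\<^sup>2 * (cmod (of_real t - w))\<^sup>2 - (r\<^sup>2 - t\<^sup>2) * ((cmod w)\<^sup>2 - r\<^sup>2)"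
proof -
  define a b where "a = Re w" and "b = Im w"
  define m where "m = a\<^sup>2 + b\<^sup>2"
  have "m \<noteq> 0"
    using assms by (simp add: a_def b_def m_def complex_eq_iff)
  have "(cmod w)\<^sup>2 * (cmod (of_real t - circle_inversion r w))\<^sup>2
          = m * ((t - r\<^sup>2 / m * a)\<^sup>2 + (r\<^sup>2 / m * b)\<^sup>2)"
    by (simp add: cmod_power2 circle_inversion_def m_def a_def b_def)
  also have "\<dots> = m * (t\<^sup>2 - 2 * t * (r\<^sup>2 / m) * a + (r\<^sup>2 / m)\<^sup>2 * m)"
    by (simp add: m_def power2_eq_square algebra_simps add_divide_distrib)
  also have "\<dots> = m * t\<^sup>2 - 2 * t * r\<^sup>2 * a + r\<^sup>2 * r\<^sup>2"
    using \<open>m \<noteq> 0\<close> by (simp add: field_simps power2_eq_square)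
  also have "\<dots> = r\<^sup>2 * ((t - a)\<^sup>2 + b\<^sup>2) - (r\<^sup>2 - t\<^sup>2) * (m - r\<^sup>2)"
    by (simp add: m_def algebra_simps power2_eq_square)
  also have "\<dots> = r\<^sup>2 * (cmod (of_real t - w))\<^sup>2 - (r\<^sup>2 - t\<^sup>2) * ((cmod w)\<^sup>2 - r\<^sup>2)"
    by (simp add: cmod_power2 a_def b_def m_def)
  finally show ?thesis .
qed

lemma cauchy_density_eq_norm: "cauchy_density t \<theta> = Im \<theta> / (pi * (cmod (of_real t - \<theta>))\<^sup>2)"
  by (simp add: cauchy_density_def cmod_power2 power2_commute)

lemma cauchy_density_translate:
  "cauchy_density (t - c) (\<theta> - of_real c) = cauchy_density t \<theta>"
  by (simp add: cauchy_density_eq_norm algebra_simps)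

lemma cauchy_density_pos:
  assumes "Im \<theta> > 0"
  shows "cauchy_density t \<theta> > 0"
  using assms by (simp add: cauchy_density_def add_nonneg_pos)

lemma cauchy_density_circle_inversion:
  fixes t r :: real and w :: complex
  assumes "Im w > 0" and "r > 0"
  defines "D \<equiv> r\<^sup>2 * (cmod (of_real t - w))\<^sup>2 - (r\<^sup>2 - t\<^sup>2) * ((cmod w)\<^sup>2 - r\<^sup>2)"
  shows "cauchy_density t (circle_inversion r w) = r\<^sup>2 * Im w / (pi * D)" and "D > 0"
proof -
  have "w \<noteq> 0"
    using assms(1) by auto
  then have D: "D = (cmod w)\<^sup>2 * (cmod (of_real t - circle_inversion r w))\<^sup>2"
    unfolding D_def by (rule norm_diff_circle_inversion[symmetric])
  show "cauchy_density t (circle_inversion r w) = r\<^sup>2 * Im w / (pi * D)"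
    using \<open>w \<noteq> 0\<close> by (simp add: D cauchy_density_eq_norm Im_circle_inversion field_simps)
  have "Im (circle_inversion r w) > 0"
    using assms(1,2) by (simp add: Im_circle_inversion_pos)
  then have "of_real t - circle_inversion r w \<noteq> 0"
    by (auto simp: complex_eq_iff)
  then show "D > 0"
    using \<open>w \<noteq> 0\<close> by (simp add: D)
qed

lemma cauchy_density_le_circle_inversion:
  assumes "Im w > 0" and "r > 0" and "r < cmod w" and "\<bar>t\<bar> \<le> r"
  shows "cauchy_density t w \<le> cauchy_density t (circle_inversion r w)"
proof -
  define Q where "Q = (cmod (of_real t - w))\<^sup>2"
  define G where "G = (r\<^sup>2 - t\<^sup>2) * ((cmod w)\<^sup>2 - r\<^sup>2)"
  have "t\<^sup>2 \<le> r\<^sup>2"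
    using power_mono[OF assms(4), of 2] by simp
  moreover have "r\<^sup>2 < (cmod w)\<^sup>2"
    using assms(2,3) by (simp add: power_strict_mono)
  ultimately have "G \<ge> 0"
    by (simp add: G_def)
  have "r\<^sup>2 * Q - G > 0"
    using cauchy_density_circle_inversion(2)[OF assms(1,2)] by (simp add: Q_def G_def)
  have "cauchy_density t w = r\<^sup>2 * Im w / (pi * (r\<^sup>2 * Q))"
    using assms(2) by (simp add: cauchy_density_eq_norm Q_def)
  also have "\<dots> \<le> r\<^sup>2 * Im w / (pi * (r\<^sup>2 * Q - G))"
    using \<open>G \<ge> 0\<close> \<open>r\<^sup>2 * Q - G > 0\<close> assms(1) by (intro divide_left_mono) auto
  also have "\<dots> = cauchy_density t (circle_inversion r w)"
    by (simp add: cauchy_density_circle_inversion(1)[OF assms(1,2)] Q_def G_def)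
  finally show ?thesis .
qed

lemma cauchy_density_less_circle_inversion:
  assumes "Im w > 0" and "r < cmod w" and "\<bar>t\<bar> < r"
  shows "cauchy_density t w < cauchy_density t (circle_inversion r w)"
proof -
  define Q where "Q = (cmod (of_real t - w))\<^sup>2"
  define G where "G = (r\<^sup>2 - t\<^sup>2) * ((cmod w)\<^sup>2 - r\<^sup>2)"
  have "r > 0"
    using assms(3) by linarith
  have "t\<^sup>2 < r\<^sup>2"
    using power_strict_mono[OF assms(3), of 2] by simp
  moreover have "r\<^sup>2 < (cmod w)\<^sup>2"
    using assms(2) \<open>r > 0\<close> by (simp add: power_strict_mono)
  ultimately have "G > 0"
    by (simp add: G_def)
  have "r\<^sup>2 * Q - G > 0"
    using cauchy_density_circle_inversion(2)[OF assms(1) \<open>r > 0\<close>] by (simp add: Q_def G_def)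
  have "cauchy_density t w = r\<^sup>2 * Im w / (pi * (r\<^sup>2 * Q))"
    using \<open>r > 0\<close> by (simp add: cauchy_density_eq_norm Q_def)
  also have "\<dots> < r\<^sup>2 * Im w / (pi * (r\<^sup>2 * Q - G))"
    using \<open>G > 0\<close> \<open>r\<^sup>2 * Q - G > 0\<close> \<open>r > 0\<close> assms(1) by (intro divide_strict_left_mono) auto
  also have "\<dots> = cauchy_density t (circle_inversion r w)"
    by (simp add: cauchy_density_circle_inversion(1)[OF assms(1) \<open>r > 0\<close>] Q_def G_def)
  finally show ?thesis .
qed

lemma cauchy_mle_norm_le:
  assumes mle: "is_cauchy_mle n x \<theta>"
    and sample: "\<And>j. j \<in> {1..n} \<Longrightarrow> \<bar>x j - c\<bar> \<le> r"
    and "k \<in> {1..n}" and "\<bar>x k - c\<bar> < r"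
  shows "cmod (\<theta> - of_real c) \<le> r"
proof (rule ccontr)
  define w where "w = \<theta> - of_real c"
  define \<eta> where "\<eta> = of_real c + circle_inversion r w"
  assume "\<not> ?thesis"
  then have "r < cmod w"
    by (simp add: w_def)
  have "r > 0"
    using \<open>\<bar>x k - c\<bar> < r\<close> by linarith
  have "Im w > 0"
    using mle by (simp add: is_cauchy_mle_def w_def)
  then have "Im \<eta> > 0"
    using \<open>r > 0\<close> by (simp add: \<eta>_def Im_circle_inversion_pos)
  have density: "cauchy_density (x j) \<theta> = cauchy_density (x j - c) w"
    "cauchy_density (x j) \<eta> = cauchy_density (x j - c) (circle_inversion r w)" for j
    using cauchy_density_translate[of "x j" c \<theta>] cauchy_density_translate[of "x j" c \<eta>]
    by (simp_all add: w_def \<eta>_def)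
  have "cauchy_likelihood n x \<theta> < cauchy_likelihood n x \<eta>"
    unfolding cauchy_likelihood_def
  proof (rule prod_mono_strict[OF \<open>k \<in> {1..n}\<close>])
    show "cauchy_density (x k) \<theta> < cauchy_density (x k) \<eta>"
      unfolding density using \<open>Im w > 0\<close> \<open>r < cmod w\<close> \<open>\<bar>x k - c\<bar> < r\<close>
      by (rule cauchy_density_less_circle_inversion)
    show "0 \<le> cauchy_density (x j) \<theta> \<and> cauchy_density (x j) \<theta> \<le> cauchy_density (x j) \<eta>"
      if "j \<in> {1..n}" for j
      unfolding density
      using cauchy_density_pos[OF \<open>Im w > 0\<close>] \<open>Im w > 0\<close> \<open>r > 0\<close> \<open>r < cmod w\<close> sample[OF that]
      by (auto intro: less_imp_le cauchy_density_le_circle_inversion)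
    show "0 < cauchy_density (x j) \<eta>" for j
      using \<open>Im \<eta> > 0\<close> by (rule cauchy_density_pos)
  qed simp
  then show False
    using mle \<open>Im \<eta> > 0\<close> by (force simp: is_cauchy_mle_def)
qed

theorem mainTheorem10:
  fixes n :: nat and x :: "nat \<Rightarrow> real" and \<theta> :: complex
  assumes "n \<ge> 3"
    and "\<And>i j. 1 \<le> i \<Longrightarrow> i < j \<Longrightarrow> j \<le> n \<Longrightarrow> x i < x j"
    and "is_cauchy_mle n x \<theta>"
  shows "cmod (\<theta> - complex_of_real ((x 1 + x n) / 2)) \<le> (x n - x 1) / 2"
proof (rule cauchy_mle_norm_le[OF assms(3)])
  show "\<bar>x j - (x 1 + x n) / 2\<bar> \<le> (x n - x 1) / 2" if "j \<in> {1..n}" for j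
  proof -
    have "x 1 \<le> x j"
      using that assms(2)[of 1 j] by (cases "j = 1") auto
    moreover have "x j \<le> x n"
      using that assms(2)[of j n] by (cases "j = n") auto
    ultimately show ?thesis
      by (simp add: abs_le_iff field_simps)
  qed
  show "2 \<in> {1..n}"
    using assms(1) by simp
  have "x 1 < x 2" and "x 2 < x n"
    using assms(1) assms(2)[of 1 2] assms(2)[of 2 n] by auto
  then show "\<bar>x 2 - (x 1 + x n) / 2\<bar> < (x n - x 1) / 2"
    by (simp add: abs_less_iff field_simps)
qed

end
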